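(* Let $M[P,Q]$ be a lattice path matroid on $\{1,\dots,m+r\}$ with presentation $(N_i: i\in\{1,\dots,r\})$, $N_i=[s_i,t_i]$. Suppose there exist an integer $x$ and an index $1\le j\le r-1$ such that $s_j<x<t_j$ and $s_{j+1}<x+1<t_{j+1}$. Then $P(M[P,Q])$ has a nontrivial hyperplane split.
   Context: A lattice path is a path from $(0,0)$ using unit steps East $(1,0)$ and North $(0,1)$. Let $P=p_1\dots p_{m+r}$ and $Q=q_1\dots q_{m+r}$ be lattice paths from $(0,0)$ to $(m,r)$ with $P$ never going above $Q$; let the North steps of $P$ be $p_{s_1},\dots,p_{s_r}$ with $s_1<\dots<s_r$ and those of $Q$ be $q_{t_1},\dots,q_{t_r}$ with $t_1<\dots<t_r$, and let $N_i=[s_i,t_i]=\{s_i,s_i+1,\dots,t_i\}$. The lattice path matroid $M[P,Q]$ is the transversal matroid on $\{1,\dots,m+r\}$ with presentation $(N_1,\dots,N_r)$: its independent sets are the partial transversals, i.e. sets $\{x_k:k\in K\}$ of $|K|$ distinct elements with $x_k\in N_k$, $K\subseteq\{1,\dots,r\}$. For a matroid $N$ on $E=\{1,\dots,n\}$, $P(N)=\mathrm{conv}\{\sum_{i\in B}e_i : B \text{ a base of } N\}\subset\mathbb{R}^n$; a hyperplane split of $P(N)$ is an expression $P(N)=P(N_1)\cup P(N_2)$ with $N_1,N_2$ matroids on $E$ such that $P(N_1)\cap P(N_2)$ is a face of both, and it is nontrivial if $P(N_1)\neq P(N)\neq P(N_2)$. *)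

theory Defs
  imports "HOL-Analysis.Analysis" "HOL-Library.Function_Algebras"
begin

text \<open>Points of R^n are represented as functions nat => real; the polytopes
below live in the coordinates 1..n (all other coordinates are 0).
We equip function spaces with the pointwise real vector space structure
so that the library notions convex hull and face_of apply.\<close>

instantiation "fun" :: (type, real_vector) real_vector
begin
definition scaleR_fun :: "real \<Rightarrow> ('a \<Rightarrow> 'b) \<Rightarrow> 'a \<Rightarrow> 'b"
  where "scaleR_fun c f = (\<lambda>x. c *\<^sub>R f x)"
instance
  by standard (auto simp: scaleR_fun_def fun_eq_iff scaleR_add_right scaleR_add_left)
end

text \<open>A lattice path is a word in E/N steps; we encode it as a bool list,
True = North step (0,1), False = East step (1,0).\<close>

definition lattice_path :: "nat \<Rightarrow> nat \<Rightarrow> bool list \<Rightarrow> bool" where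
  "lattice_path m r p \<longleftrightarrow> length p = m + r \<and> length (filter id p) = r"

definition height :: "bool list \<Rightarrow> nat \<Rightarrow> nat" where
  "height p k = length (filter id (take k p))"

definition never_above :: "bool list \<Rightarrow> bool list \<Rightarrow> bool" where
  "never_above P Q \<longleftrightarrow> (\<forall>k \<le> length P. height P k \<le> height Q k)"

definition north_steps :: "bool list \<Rightarrow> nat list" where
  "north_steps p = filter (\<lambda>k. p ! (k - 1)) [1..<length p + 1]"

text \<open>Position of the i-th North step (1-based i).\<close>
definition north_pos :: "bool list \<Rightarrow> nat \<Rightarrow> nat" where
  "north_pos p i = north_steps p ! (i - 1)"

text \<open>Presentation interval N_i of M[P,Q]: between the i-th North step of the
upper path Q and the i-th North step of the lower path P.\<close>
definition lpm_interval :: "bool list \<Rightarrow> bool list \<Rightarrow> nat \<Rightarrow> nat set" where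
  "lpm_interval P Q i = {north_pos Q i .. north_pos P i}"

text \<open>Independent sets of M[P,Q]: partial transversals of (N_1,...,N_r).\<close>
definition lpm_indep :: "nat \<Rightarrow> bool list \<Rightarrow> bool list \<Rightarrow> nat set \<Rightarrow> bool" where
  "lpm_indep r P Q I \<longleftrightarrow>
     (\<exists>K f. K \<subseteq> {1..r} \<and> bij_betw f K I \<and> (\<forall>k\<in>K. f k \<in> lpm_interval P Q k))"

definition lpm_bases :: "nat \<Rightarrow> bool list \<Rightarrow> bool list \<Rightarrow> nat set set" where
  "lpm_bases r P Q = {B. lpm_indep r P Q B \<and> (\<forall>I. lpm_indep r P Q I \<and> B \<subseteq> I \<longrightarrow> I = B)}"

definition matroid_bases :: "nat set \<Rightarrow> nat set set \<Rightarrow> bool" where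
  "matroid_bases E \<B> \<longleftrightarrow>
     \<B> \<noteq> {} \<and> (\<forall>B\<in>\<B>. B \<subseteq> E) \<and>
     (\<forall>B1\<in>\<B>. \<forall>B2\<in>\<B>. \<forall>x\<in>B1 - B2. \<exists>y\<in>B2 - B1. insert y (B1 - {x}) \<in> \<B>)"

definition indicator_vec :: "nat set \<Rightarrow> (nat \<Rightarrow> real)" where
  "indicator_vec B = (\<lambda>i. if i \<in> B then 1 else 0)"

definition base_polytope :: "nat set set \<Rightarrow> (nat \<Rightarrow> real) set" where
  "base_polytope \<B> = convex hull (indicator_vec ` \<B>)"

definition has_nontrivial_hyperplane_split :: "nat set \<Rightarrow> nat set set \<Rightarrow> bool" where
  "has_nontrivial_hyperplane_split E \<B> \<longleftrightarrow>
     (\<exists>\<B>1 \<B>2. matroid_bases E \<B>1 \<and> matroid_bases E \<B>2 \<and>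
        base_polytope \<B> = base_polytope \<B>1 \<union> base_polytope \<B>2 \<and>
        (base_polytope \<B>1 \<inter> base_polytope \<B>2) face_of base_polytope \<B>1 \<and>
        (base_polytope \<B>1 \<inter> base_polytope \<B>2) face_of base_polytope \<B>2 \<and>
        base_polytope \<B>1 \<noteq> base_polytope \<B> \<and> base_polytope \<B>2 \<noteq> base_polytope \<B>)"

end

theory Submission
  imports Defs
begin

text \<open>
  Put \<open>n = m + r\<close> and call \<open>|{b \<in> B. b \<le> t}|\<close> the prefix count of \<open>B\<close> at \<open>t\<close>.
  The bases of \<open>M[P,Q]\<close> are exactly the \<open>r\<close>-subsets of \<open>{1..n}\<close> whose prefix count at every \<open>t\<close>
  lies between the heights of \<open>P\<close> and \<open>Q\<close> after \<open>t\<close> steps.  We therefore work with the general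
  family \<open>count_bounded lo hi n r\<close> of \<open>r\<close>-subsets with prefix counts bounded by \<open>lo\<close> and \<open>hi\<close>:
  (1) when nonempty it is the set of bases of a matroid (basis exchange);
  (2) it is closed under balancing: distributing the symmetric difference of two members
      alternately yields two members with the same indicator sum whose prefix counts differ
      by at most one.
  A minimal-deficit argument on convex combinations shows that (2) makes the base polytope
  split along the hyperplane \<open>\<Sum>i\<le>x. p i = j\<close> into the base polytopes of the members with
  prefix count \<open>\<ge> j\<close> resp. \<open>\<le> j\<close> at \<open>x\<close>, which are again count-bounded families.  This split
  is nontrivial once some member has prefix count \<open>< j\<close> at \<open>x\<close> and another one \<open>> j\<close>; in
  the theorem these are the north-step sets of \<open>P\<close> and \<open>Q\<close>, using only the hypotheses
  \<open>x < north_pos P j\<close> and \<open>north_pos Q (j + 1) \<le> x\<close>.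
\<close>

section \<open>Prefix counts\<close>

definition prefix_count :: "nat set \<Rightarrow> nat \<Rightarrow> nat" where
  "prefix_count S t = card {s\<in>S. s \<le> t}"

lemma prefix_count_le_card: "finite S \<Longrightarrow> prefix_count S t \<le> card S"
  unfolding prefix_count_def by (intro card_mono) auto

lemma prefix_count_full: "finite S \<Longrightarrow> S \<subseteq> {..t} \<Longrightarrow> prefix_count S t = card S"
  unfolding prefix_count_def by (rule arg_cong[where f=card]) auto

lemma prefix_count_zero: "0 \<notin> S \<Longrightarrow> prefix_count S 0 = 0"
  unfolding prefix_count_def by (simp add: Collect_conv_if)

lemma prefix_count_add:
  assumes "finite S" "s \<le> t"
  shows "prefix_count S t = prefix_count S s + card {y\<in>S. s < y \<and> y \<le> t}"
proof -
  have "{y\<in>S. y \<le> t} = {y\<in>S. y \<le> s} \<union> {y\<in>S. s < y \<and> y \<le> t}" using assms(2) by auto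
  then show ?thesis unfolding prefix_count_def using assms(1) by (simp add: card_Un_disjoint disjoint_iff)
qed

lemma prefix_count_Suc:
  assumes "finite S"
  shows "prefix_count S (Suc t) = prefix_count S t + (if Suc t \<in> S then 1 else 0)"
proof -
  have "{y\<in>S. t < y \<and> y \<le> Suc t} = (if Suc t \<in> S then {Suc t} else {})"
    by (auto simp: le_Suc_eq)
  then show ?thesis using prefix_count_add[OF assms, of t "Suc t"] by simp
qed

lemma prefix_count_complement:
  assumes "finite S"
  shows "prefix_count S t + card {s\<in>S. t < s} = card S"
proof -
  have "S = {s\<in>S. s \<le> t} \<union> {s\<in>S. t < s}" by auto
  then show ?thesis unfolding prefix_count_def using assms
    by (metis (no_types, lifting) card_Un_disjoint disjoint_iff finite_Un mem_Collect_eq not_le)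
qed

lemma prefix_count_Un_disjoint:
  "finite S \<Longrightarrow> finite T \<Longrightarrow> S \<inter> T = {} \<Longrightarrow> prefix_count (S \<union> T) t = prefix_count S t + prefix_count T t"
  unfolding prefix_count_def by (subst card_Un_disjoint[symmetric]) (auto intro: arg_cong[where f=card])

lemma prefix_count_swap:
  assumes "finite B" "x \<in> B" "y \<notin> B"
  shows "int (prefix_count (insert y (B - {x})) t)
           = int (prefix_count B t) - (if x \<le> t then 1 else 0) + (if y \<le> t then 1 else 0)"
proof -
  have fin: "finite {s\<in>B. s \<le> t}" using assms(1) by auto
  have eq: "{s\<in>insert y (B - {x}). s \<le> t} = (if y \<le> t then insert y else id) ({s\<in>B. s \<le> t} - {x})"
    by auto
  have "x \<le> t \<Longrightarrow> x \<in> {s\<in>B. s \<le> t}" using assms(2) by simp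
  then have "x \<le> t \<Longrightarrow> 1 \<le> card {s\<in>B. s \<le> t}"
    using fin by (metis One_nat_def Suc_leI card_gt_0_iff empty_iff)
  then show ?thesis unfolding prefix_count_def eq using assms fin
    by (auto simp: card_insert_disjoint card_Diff_singleton_if of_nat_diff)
qed

lemma prefix_count_gap:
  assumes "finite B1" "finite B2" "s \<le> t" "\<forall>y\<in>B2 - B1. y \<le> s \<or> t < y"
  shows "int (prefix_count B2 t) - int (prefix_count B1 t) \<le> int (prefix_count B2 s) - int (prefix_count B1 s)"
proof -
  have "{y\<in>B2. s < y \<and> y \<le> t} \<subseteq> {y\<in>B1. s < y \<and> y \<le> t}"
  proof (intro subsetI)
    fix y assume "y \<in> {y\<in>B2. s < y \<and> y \<le> t}"
    then show "y \<in> {y\<in>B1. s < y \<and> y \<le> t}" using assms(4) by (cases "y \<in> B1") (auto dest: bspec[of _ _ y])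
  qed
  then have "card {y\<in>B2. s < y \<and> y \<le> t} \<le> card {y\<in>B1. s < y \<and> y \<le> t}"
    using assms(1) by (intro card_mono) auto
  then show ?thesis using prefix_count_add[OF assms(1,3)] prefix_count_add[OF assms(2,3)] by linarith
qed

section \<open>Families of sets with bounded prefix counts\<close>

definition count_bounded :: "(nat \<Rightarrow> nat) \<Rightarrow> (nat \<Rightarrow> nat) \<Rightarrow> nat \<Rightarrow> nat \<Rightarrow> nat set set" where
  "count_bounded lo hi n r =
     {B. B \<subseteq> {1..n} \<and> card B = r \<and> (\<forall>t. lo t \<le> prefix_count B t \<and> prefix_count B t \<le> hi t)}"

lemma count_bounded_finite: "B \<in> count_bounded lo hi n r \<Longrightarrow> finite B"
  unfolding count_bounded_def by (auto intro: finite_subset)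

lemma count_bounded_swap:
  assumes B: "B \<in> count_bounded lo hi n r" and x: "x \<in> B" and y: "y \<in> {1..n} - B"
    and bounds: "\<And>t. int (lo t) \<le> int (prefix_count B t) - (if x \<le> t then 1 else 0) + (if y \<le> t then 1 else 0)
       \<and> int (prefix_count B t) - (if x \<le> t then 1 else 0) + (if y \<le> t then 1 else 0) \<le> int (hi t)"
  shows "insert y (B - {x}) \<in> count_bounded lo hi n r"
proof -
  have fin: "finite B" using B by (rule count_bounded_finite)
  have "card (insert y (B - {x})) = card B"
    using fin x y by (simp add: card_insert_disjoint card_Diff_singleton_if card_gt_0_iff)
       (metis Suc_pred card_gt_0_iff empty_iff)
  moreover have "lo t \<le> prefix_count (insert y (B - {x})) t \<and> prefix_count (insert y (B - {x})) t \<le> hi t" for t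
  proof -
    have "int (lo t) \<le> int (prefix_count (insert y (B - {x})) t)"
      "int (prefix_count (insert y (B - {x})) t) \<le> int (hi t)"
      using bounds[of t] prefix_count_swap[OF fin x, of y t] y by auto
    then show ?thesis by simp
  qed
  ultimately show ?thesis using B y unfolding count_bounded_def by auto
qed

(* Moving an element to the right lowers the counts on [x, y), which needs slack above lo there. *)
lemma count_bounded_swap_right:
  assumes B: "B \<in> count_bounded lo hi n r" and x: "x \<in> B" and y: "y \<in> {1..n} - B" and "x < y"
    and slack: "\<And>t. x \<le> t \<Longrightarrow> t < y \<Longrightarrow> lo t < prefix_count B t"
  shows "insert y (B - {x}) \<in> count_bounded lo hi n r"
proof (rule count_bounded_swap[OF B x y])
  fix t
  have "lo t \<le> prefix_count B t \<and> prefix_count B t \<le> hi t" using B unfolding count_bounded_def by auto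
  then show "int (lo t) \<le> int (prefix_count B t) - (if x \<le> t then 1 else 0) + (if y \<le> t then 1 else 0)
       \<and> int (prefix_count B t) - (if x \<le> t then 1 else 0) + (if y \<le> t then 1 else 0) \<le> int (hi t)"
    using slack[of t] \<open>x < y\<close> by auto
qed

(* Moving an element to the left raises the counts on [y, x), which needs slack below hi there. *)
lemma count_bounded_swap_left:
  assumes B: "B \<in> count_bounded lo hi n r" and x: "x \<in> B" and y: "y \<in> {1..n} - B" and "y < x"
    and slack: "\<And>t. y \<le> t \<Longrightarrow> t < x \<Longrightarrow> prefix_count B t < hi t"
  shows "insert y (B - {x}) \<in> count_bounded lo hi n r"
proof (rule count_bounded_swap[OF B x y])
  fix t
  have "lo t \<le> prefix_count B t \<and> prefix_count B t \<le> hi t" using B unfolding count_bounded_def by auto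
  then show "int (lo t) \<le> int (prefix_count B t) - (if x \<le> t then 1 else 0) + (if y \<le> t then 1 else 0)
       \<and> int (prefix_count B t) - (if x \<le> t then 1 else 0) + (if y \<le> t then 1 else 0) \<le> int (hi t)"
    using slack[of t] \<open>y < x\<close> by auto
qed

(* If B2 is behind B1 at x, swap x for the first element of B2 - B1 after x. *)
lemma count_bounded_exchange_right:
  assumes B1: "B1 \<in> count_bounded lo hi n r" and B2: "B2 \<in> count_bounded lo hi n r"
    and x: "x \<in> B1" and ahead: "prefix_count B2 x < prefix_count B1 x"
  shows "\<exists>y\<in>B2 - B1. insert y (B1 - {x}) \<in> count_bounded lo hi n r"
proof -
  have sub: "B1 \<subseteq> {1..n}" "B2 \<subseteq> {1..n}" and card: "card B1 = r" "card B2 = r"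
    and bnd: "\<And>t. lo t \<le> prefix_count B2 t"
    using B1 B2 unfolding count_bounded_def by auto
  have fin: "finite B1" "finite B2" using B1 B2 by (auto intro: count_bounded_finite)
  have "x \<le> n" using x sub by auto
  have "B1 \<subseteq> {..n}" "B2 \<subseteq> {..n}" using sub by auto
  then have full: "prefix_count B1 n = prefix_count B2 n"
    using card prefix_count_full[OF fin(1), of n] prefix_count_full[OF fin(2), of n] by auto
  define Y where "Y = {y\<in>B2 - B1. x < y}"
  \<comment> \<open>\<open>B2\<close> has caught up with \<open>B1\<close> at \<open>n\<close>, so it gains on \<open>B1\<close> somewhere right of \<open>x\<close>\<close>
  have "Y \<noteq> {}" using prefix_count_gap[OF fin \<open>x \<le> n\<close>] ahead full unfolding Y_def by fastforce
  moreover have "finite Y" unfolding Y_def using fin by auto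
  ultimately have yY: "Min Y \<in> Y" and ymin: "\<And>z. z \<in> Y \<Longrightarrow> Min Y \<le> z" by auto
  have "lo t < prefix_count B1 t" if "x \<le> t" "t < Min Y" for t
  proof -
    have "\<forall>y\<in>B2 - B1. y \<le> x \<or> t < y" using ymin that unfolding Y_def by fastforce
    then show ?thesis using prefix_count_gap[OF fin that(1)] ahead bnd[of t] by linarith
  qed
  then have "insert (Min Y) (B1 - {x}) \<in> count_bounded lo hi n r"
    using yY sub x unfolding Y_def by (intro count_bounded_swap_right[OF B1]) auto
  then show ?thesis using yY unfolding Y_def by blast
qed

(* If B2 is ahead of B1 just before x, swap x for the last element of B2 - B1 before x. *)
lemma count_bounded_exchange_left:
  assumes B1: "B1 \<in> count_bounded lo hi n r" and B2: "B2 \<in> count_bounded lo hi n r"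
    and x: "x \<in> B1" and behind: "prefix_count B1 (x - 1) < prefix_count B2 (x - 1)"
  shows "\<exists>y\<in>B2 - B1. insert y (B1 - {x}) \<in> count_bounded lo hi n r"
proof -
  have sub: "B1 \<subseteq> {1..n}" "B2 \<subseteq> {1..n}" and bnd: "\<And>t. prefix_count B2 t \<le> hi t"
    using B1 B2 unfolding count_bounded_def by auto
  have fin: "finite B1" "finite B2" using B1 B2 by (auto intro: count_bounded_finite)
  have x1: "1 \<le> x" using x sub by auto
  have "0 \<notin> B1" "0 \<notin> B2" using sub by auto
  then have zero: "prefix_count B1 0 = prefix_count B2 0" by (simp add: prefix_count_zero)
  define Y where "Y = {y\<in>B2 - B1. y < x}"
  \<comment> \<open>both counts start at 0, so \<open>B2\<close> got ahead of \<open>B1\<close> somewhere left of \<open>x\<close>\<close>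
  have "Y \<noteq> {}" using prefix_count_gap[OF fin, of 0 "x - 1"] behind zero x1 unfolding Y_def by fastforce
  moreover have "finite Y" unfolding Y_def using fin by auto
  ultimately have yY: "Max Y \<in> Y" and ymax: "\<And>z. z \<in> Y \<Longrightarrow> z \<le> Max Y" by auto
  have "prefix_count B1 t < hi t" if "Max Y \<le> t" "t < x" for t
  proof -
    have "\<forall>y\<in>B2 - B1. y \<le> t \<or> x - 1 < y"
    proof
      fix y assume y: "y \<in> B2 - B1"
      show "y \<le> t \<or> x - 1 < y"
      proof (cases "y < x")
        case True
        then have "y \<in> Y" using y unfolding Y_def by simp
        then show ?thesis using ymax that(1) by fastforce
      qed (use x1 in linarith)
    qed
    then show ?thesis using prefix_count_gap[OF fin, of t "x - 1"] that behind bnd[of t] by linarith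
  qed
  then have "insert (Max Y) (B1 - {x}) \<in> count_bounded lo hi n r"
    using yY sub x unfolding Y_def by (intro count_bounded_swap_left[OF B1]) auto
  then show ?thesis using yY unfolding Y_def by blast
qed

(* Basis exchange: one of the two previous cases always applies. *)
lemma count_bounded_exchange:
  assumes B1: "B1 \<in> count_bounded lo hi n r" and B2: "B2 \<in> count_bounded lo hi n r" and x: "x \<in> B1 - B2"
  shows "\<exists>y\<in>B2 - B1. insert y (B1 - {x}) \<in> count_bounded lo hi n r"
proof (cases "prefix_count B1 (x - 1) < prefix_count B2 (x - 1)")
  case True
  then show ?thesis using count_bounded_exchange_left[OF B1 B2] x by blast
next
  case False
  have "1 \<le> x" using x B1 unfolding count_bounded_def by auto
  then have "prefix_count B2 x < prefix_count B1 x"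
    using False x prefix_count_Suc[OF count_bounded_finite[OF B1], of "x - 1"]
      prefix_count_Suc[OF count_bounded_finite[OF B2], of "x - 1"] by simp
  then show ?thesis using count_bounded_exchange_right[OF B1 B2] x by blast
qed

lemma count_bounded_matroid:
  assumes "count_bounded lo hi n r \<noteq> {}"
  shows "matroid_bases {1..n} (count_bounded lo hi n r)"
proof -
  have "\<forall>B\<in>count_bounded lo hi n r. B \<subseteq> {1..n}" by (auto simp: count_bounded_def)
  then show ?thesis using assms count_bounded_exchange unfolding matroid_bases_def by blast
qed

lemma prefix_count_alternating:
  assumes fin: "finite D" and "0 \<notin> D"
  shows "prefix_count {d\<in>D. odd (prefix_count D d)} t = (prefix_count D t + 1) div 2
       \<and> prefix_count {d\<in>D. even (prefix_count D d)} t = prefix_count D t div 2"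
proof (induction t)
  case 0
  then show ?case using assms(2) by (simp add: prefix_count_zero)
next
  case (Suc t)
  have "finite {d\<in>D. odd (prefix_count D d)}" "finite {d\<in>D. even (prefix_count D d)}" using fin by auto
  then show ?case
    using Suc prefix_count_Suc[OF fin, of t] by (cases "Suc t \<in> D") (auto simp: prefix_count_Suc)
qed

definition odd_half :: "nat set \<Rightarrow> nat set \<Rightarrow> nat set" where
  "odd_half B B' = (B \<inter> B') \<union> {d\<in>sym_diff B B'. odd (prefix_count (sym_diff B B') d)}"

definition even_half :: "nat set \<Rightarrow> nat set \<Rightarrow> nat set" where
  "even_half B B' = (B \<inter> B') \<union> {d\<in>sym_diff B B'. even (prefix_count (sym_diff B B') d)}"

lemma indicator_vec_halves:
  "indicator_vec B + indicator_vec B' = indicator_vec (odd_half B B') + indicator_vec (even_half B B')"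
  unfolding indicator_vec_def odd_half_def even_half_def plus_fun_def by auto

lemma prefix_count_halves:
  assumes fin: "finite B" "finite B'" and "0 \<notin> B" "0 \<notin> B'"
  shows "prefix_count B t = prefix_count (B \<inter> B') t + prefix_count (B - B') t"
    and "prefix_count B' t = prefix_count (B \<inter> B') t + prefix_count (B' - B) t"
    and "prefix_count (odd_half B B') t
           = prefix_count (B \<inter> B') t + (prefix_count (B - B') t + prefix_count (B' - B) t + 1) div 2"
    and "prefix_count (even_half B B') t
           = prefix_count (B \<inter> B') t + (prefix_count (B - B') t + prefix_count (B' - B) t) div 2"
proof -
  let ?C = "B \<inter> B'" and ?D = "sym_diff B B'"
  have finD: "finite ?C" "finite (B - B')" "finite (B' - B)" "finite ?D" using fin by auto
  show "prefix_count B t = prefix_count ?C t + prefix_count (B - B') t"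
    using prefix_count_Un_disjoint[OF finD(1,2), of t] by (metis Int_Diff_disjoint Int_Diff_Un)
  show "prefix_count B' t = prefix_count ?C t + prefix_count (B' - B) t"
    using prefix_count_Un_disjoint[OF finD(1,3), of t] by (metis Int_Diff_disjoint Int_Diff_Un Int_commute)
  have D: "prefix_count ?D t = prefix_count (B - B') t + prefix_count (B' - B) t"
    using prefix_count_Un_disjoint[OF finD(2,3), of t] by auto
  have "0 \<notin> ?D" using assms(3,4) by auto
  note alt = prefix_count_alternating[OF finD(4) this]
  have "finite {d\<in>?D. odd (prefix_count ?D d)}" "finite {d\<in>?D. even (prefix_count ?D d)}"
    by (rule finite_subset[OF _ finD(4)], blast)+
  moreover have "?C \<inter> {d\<in>?D. odd (prefix_count ?D d)} = {}" "?C \<inter> {d\<in>?D. even (prefix_count ?D d)} = {}"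
    by auto
  ultimately show "prefix_count (odd_half B B') t
           = prefix_count ?C t + (prefix_count (B - B') t + prefix_count (B' - B) t + 1) div 2"
    "prefix_count (even_half B B') t
           = prefix_count ?C t + (prefix_count (B - B') t + prefix_count (B' - B) t) div 2"
    unfolding odd_half_def even_half_def D[symmetric] using alt prefix_count_Un_disjoint[OF finD(1)] by simp_all
qed

lemma count_bounded_balance:
  assumes B: "B \<in> count_bounded lo hi n r" and B': "B' \<in> count_bounded lo hi n r"
  shows "odd_half B B' \<in> count_bounded lo hi n r" "even_half B B' \<in> count_bounded lo hi n r"
    and "prefix_count (even_half B B') t \<le> prefix_count (odd_half B B') t"
        "prefix_count (odd_half B B') t \<le> prefix_count (even_half B B') t + 1"
proof -
  have sub: "B \<subseteq> {1..n}" "B' \<subseteq> {1..n}" and card: "card B = r" "card B' = r"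
    and bnd: "\<And>t. lo t \<le> prefix_count B t \<and> prefix_count B t \<le> hi t"
             "\<And>t. lo t \<le> prefix_count B' t \<and> prefix_count B' t \<le> hi t"
    using B B' unfolding count_bounded_def by auto
  have fin: "finite B" "finite B'" using B B' by (auto intro: count_bounded_finite)
  have "0 \<notin> B" "0 \<notin> B'" using sub by auto
  note halves = prefix_count_halves[OF fin this]
  show "prefix_count (even_half B B') t \<le> prefix_count (odd_half B B') t"
    "prefix_count (odd_half B B') t \<le> prefix_count (even_half B B') t + 1"
    using halves(3,4)[of t] by auto
  have between: "min (prefix_count B t) (prefix_count B' t) \<le> prefix_count H t
      \<and> prefix_count H t \<le> max (prefix_count B t) (prefix_count B' t)"
    if "H \<in> {odd_half B B', even_half B B'}" for H t
    using that halves[of t] by auto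
  have "H \<in> count_bounded lo hi n r" if H: "H \<in> {odd_half B B', even_half B B'}" for H
  proof -
    have "H \<subseteq> {1..n}" using H sub unfolding odd_half_def even_half_def by auto
    then have "finite H" "H \<subseteq> {..n}" by (auto intro: finite_subset)
    then have "card H = prefix_count H n" using prefix_count_full by metis
    also have "\<dots> = r"
    proof -
      have "B \<subseteq> {..n}" "B' \<subseteq> {..n}" using sub by auto
      then show ?thesis using between[OF H, of n] card prefix_count_full[OF fin(1)] prefix_count_full[OF fin(2)]
        by auto
    qed
    moreover have "lo t \<le> prefix_count H t \<and> prefix_count H t \<le> hi t" for t
      using between[OF H, of t] bnd(1)[of t] bnd(2)[of t] by linarith
    ultimately show ?thesis using \<open>H \<subseteq> {1..n}\<close> unfolding count_bounded_def by auto
  qed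
  then show "odd_half B B' \<in> count_bounded lo hi n r" "even_half B B' \<in> count_bounded lo hi n r" by auto
qed

section \<open>Lattice path matroids as count-bounded families\<close>

definition north_set :: "bool list \<Rightarrow> nat set" where
  "north_set p = {k. 1 \<le> k \<and> k \<le> length p \<and> p ! (k - 1)}"

lemma north_set_subset: "north_set p \<subseteq> {1..length p}"
  unfolding north_set_def by auto

lemma finite_north_set: "finite (north_set p)"
  unfolding north_set_def by auto

lemma height_eq_prefix_count: "height p t = prefix_count (north_set p) t"
proof -
  have "height p t = card {i. i < min t (length p) \<and> p ! i}"
    unfolding height_def length_filter_conv_card by (rule arg_cong[where f=card]) auto
  also have "\<dots> = card (Suc ` {i. i < min t (length p) \<and> p ! i})"
    by (simp add: card_image)
  also have "Suc ` {i. i < min t (length p) \<and> p ! i} = {s\<in>north_set p. s \<le> t}"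
  proof
    show "Suc ` {i. i < min t (length p) \<and> p ! i} \<subseteq> {s\<in>north_set p. s \<le> t}"
      unfolding north_set_def by auto
    show "{s\<in>north_set p. s \<le> t} \<subseteq> Suc ` {i. i < min t (length p) \<and> p ! i}"
    proof
      fix s assume "s \<in> {s\<in>north_set p. s \<le> t}"
      then have "s = Suc (s - 1)" "s - 1 < min t (length p)" "p ! (s - 1)"
        unfolding north_set_def by auto
      then show "s \<in> Suc ` {i. i < min t (length p) \<and> p ! i}" by blast
    qed
  qed
  finally show ?thesis unfolding prefix_count_def .
qed

lemma set_north_steps: "set (north_steps p) = north_set p"
  unfolding north_steps_def north_set_def by auto

lemma sorted_north_steps: "sorted_wrt (<) (north_steps p)"
  unfolding north_steps_def by (rule sorted_wrt_filter) (rule sorted_wrt_upt)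

lemma length_north_steps: "length (north_steps p) = card (north_set p)"
  by (metis distinct_card set_north_steps sorted_north_steps strict_sorted_iff)

lemma lattice_path_card_north_set:
  assumes "lattice_path m r p"
  shows "card (north_set p) = r"
proof -
  have "north_set p \<subseteq> {..length p}" using north_set_subset[of p] by auto
  then have "card (north_set p) = height p (length p)"
    using height_eq_prefix_count prefix_count_full[OF finite_north_set] by metis
  then show ?thesis using assms unfolding lattice_path_def height_def by simp
qed

lemma downward_closed_mem_iff:
  fixes S :: "nat set"
  assumes "finite S" and down: "\<And>l l'. l \<in> S \<Longrightarrow> l' \<le> l \<Longrightarrow> l' \<in> S"
  shows "i \<in> S \<longleftrightarrow> Suc i \<le> card S"
proof
  assume "i \<in> S"
  then have "{..i} \<subseteq> S" using down by auto
  then have "card {..i} \<le> card S" by (rule card_mono[OF assms(1)])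
  then show "Suc i \<le> card S" by simp
next
  assume card: "Suc i \<le> card S"
  show "i \<in> S"
  proof (rule ccontr)
    assume "i \<notin> S"
    have "S \<subseteq> {..<i}"
    proof
      fix l assume "l \<in> S"
      then show "l \<in> {..<i}" using down[of l i] \<open>i \<notin> S\<close> by (cases "i \<le> l") auto
    qed
    then show False using card card_mono[of "{..<i}" S] by simp
  qed
qed

lemma sorted_nth_le_iff:
  fixes xs :: "nat list"
  assumes s: "sorted_wrt (<) xs" and i: "i < length xs"
  shows "xs ! i \<le> t \<longleftrightarrow> Suc i \<le> card {x\<in>set xs. x \<le> t}"
proof -
  let ?S = "{l. l < length xs \<and> xs ! l \<le> t}"
  have "{x\<in>set xs. x \<le> t} = (\<lambda>l. xs ! l) ` ?S" by (auto simp: in_set_conv_nth)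
  moreover have "distinct xs" using s strict_sorted_iff by blast
  then have "inj_on (\<lambda>l. xs ! l) ?S" by (auto simp: inj_on_def nth_eq_iff_index_eq)
  ultimately have "card {x\<in>set xs. x \<le> t} = card ?S" by (simp add: card_image)
  moreover have "l' \<in> ?S" if "l \<in> ?S" "l' \<le> l" for l l'
    using that sorted_wrt_nth_less[OF s, of l' l] by (cases "l' = l") auto
  then have "i \<in> ?S \<longleftrightarrow> Suc i \<le> card ?S" by (intro downward_closed_mem_iff) auto
  ultimately show ?thesis using i by simp
qed

lemma north_pos_le_iff:
  assumes "1 \<le> k" "k \<le> card (north_set p)"
  shows "north_pos p k \<le> t \<longleftrightarrow> k \<le> height p t"
proof -
  have "north_pos p k \<le> t \<longleftrightarrow> Suc (k - 1) \<le> card {x\<in>set (north_steps p). x \<le> t}"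
    unfolding north_pos_def using assms
    by (intro sorted_nth_le_iff sorted_north_steps) (auto simp: length_north_steps)
  then show ?thesis using assms by (simp add: height_eq_prefix_count prefix_count_def set_north_steps)
qed

lemma north_pos_in_north_set:
  assumes "1 \<le> k" "k \<le> card (north_set p)"
  shows "north_pos p k \<in> north_set p"
proof -
  have "k - 1 < length (north_steps p)" using assms by (simp add: length_north_steps)
  then show ?thesis unfolding north_pos_def using nth_mem set_north_steps by metis
qed

lemma north_pos_strict_mono:
  assumes "1 \<le> a" "a < b" "b \<le> card (north_set p)"
  shows "north_pos p a < north_pos p b"
  unfolding north_pos_def using assms
  by (intro sorted_wrt_nth_less[OF sorted_north_steps]) (auto simp: length_north_steps)

lemma prefix_count_rank_bij:
  assumes fin: "finite B" and "0 \<notin> B"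
  shows "bij_betw (prefix_count B) B {1..card B}"
proof -
  have less: "prefix_count B b < prefix_count B b'" if "b \<in> B" "b' \<in> B" "b < b'" for b b'
  proof -
    have "b' \<in> {s\<in>B. s \<le> b'}" "b' \<notin> {s\<in>B. s \<le> b}" "{s\<in>B. s \<le> b} \<subseteq> {s\<in>B. s \<le> b'}"
      using that by auto
    then have "{s\<in>B. s \<le> b} \<subset> {s\<in>B. s \<le> b'}" by blast
    then show ?thesis unfolding prefix_count_def using fin by (intro psubset_card_mono) auto
  qed
  have inj: "inj_on (prefix_count B) B"
    by (rule inj_onI) (metis less less_irrefl nat_neq_iff)
  have "prefix_count B b \<in> {1..card B}" if "b \<in> B" for b
  proof -
    have "b \<in> {s\<in>B. s \<le> b}" using that by simp
    then have "1 \<le> prefix_count B b" unfolding prefix_count_def using fin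
      by (metis (no_types, lifting) One_nat_def Suc_leI card_gt_0_iff empty_iff finite_subset mem_Collect_eq subsetI)
    then show ?thesis using prefix_count_le_card[OF fin] by simp
  qed
  then have "prefix_count B ` B \<subseteq> {1..card B}" by blast
  then have "prefix_count B ` B = {1..card B}" using card_image[OF inj] by (intro card_subset_eq) auto
  then show ?thesis using inj unfolding bij_betw_def by simp
qed

locale lattice_path_pair =
  fixes m r :: nat and P Q :: "bool list"
  assumes lattice_path_P: "lattice_path m r P" and lattice_path_Q: "lattice_path m r Q"
    and P_below_Q: "never_above P Q"
begin

lemma length_P: "length P = m + r" and length_Q: "length Q = m + r"
  using lattice_path_P lattice_path_Q unfolding lattice_path_def by simp_all

lemma north_pos_P_le_iff: "1 \<le> k \<Longrightarrow> k \<le> r \<Longrightarrow> north_pos P k \<le> t \<longleftrightarrow> k \<le> height P t"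
  using north_pos_le_iff lattice_path_card_north_set[OF lattice_path_P] by simp

lemma north_pos_Q_le_iff: "1 \<le> k \<Longrightarrow> k \<le> r \<Longrightarrow> north_pos Q k \<le> t \<longleftrightarrow> k \<le> height Q t"
  using north_pos_le_iff lattice_path_card_north_set[OF lattice_path_Q] by simp

lemma height_P_le: "height P t \<le> r"
  using prefix_count_le_card[OF finite_north_set] lattice_path_card_north_set[OF lattice_path_P]
  by (metis height_eq_prefix_count)

lemma height_P_le_Q: "height P t \<le> height Q t"
proof (cases "t \<le> length P")
  case True then show ?thesis using P_below_Q unfolding never_above_def by blast
next
  case False
  then have "take t P = take (length P) P" "take t Q = take (length P) Q" using length_P length_Q by auto
  then show ?thesis using P_below_Q unfolding never_above_def height_def by (metis order_refl)
qed

lemma north_pos_P_range: "1 \<le> k \<Longrightarrow> k \<le> r \<Longrightarrow> north_pos P k \<in> {1..m+r}"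
  using north_pos_in_north_set[of k P] lattice_path_card_north_set[OF lattice_path_P]
    north_set_subset[of P] length_P by force

lemma north_pos_Q_range: "1 \<le> k \<Longrightarrow> k \<le> r \<Longrightarrow> north_pos Q k \<in> {1..m+r}"
  using north_pos_in_north_set[of k Q] lattice_path_card_north_set[OF lattice_path_Q]
    north_set_subset[of Q] length_Q by force

lemma north_pos_Q_le_P: "1 \<le> k \<Longrightarrow> k \<le> r \<Longrightarrow> north_pos Q k \<le> north_pos P k"
  using north_pos_P_le_iff[of k "north_pos P k"] north_pos_Q_le_iff[of k "north_pos P k"]
    height_P_le_Q[of "north_pos P k"] by simp

lemma north_pos_P_strict_mono: "1 \<le> a \<Longrightarrow> a < b \<Longrightarrow> b \<le> r \<Longrightarrow> north_pos P a < north_pos P b"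
  using north_pos_strict_mono lattice_path_card_north_set[OF lattice_path_P] by simp

lemma lpm_interval_subset: "k \<in> {1..r} \<Longrightarrow> lpm_interval P Q k \<subseteq> {1..m+r}"
  unfolding lpm_interval_def using north_pos_P_range north_pos_Q_range by fastforce

lemma north_sets_count_bounded:
  "north_set P \<in> count_bounded (height P) (height Q) (m + r) r"
  "north_set Q \<in> count_bounded (height P) (height Q) (m + r) r"
  unfolding count_bounded_def
  using north_set_subset[of P] north_set_subset[of Q] length_P length_Q height_P_le_Q
    lattice_path_card_north_set[OF lattice_path_P] lattice_path_card_north_set[OF lattice_path_Q]
  by (auto simp: height_eq_prefix_count)

(* Put the last
   point of N_k0 in; if it is already used by some N_k1 (then k1 > k0), reassign it to N_k0
   and continue with k1. *)
lemma lpm_augment: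
  assumes "k0 \<in> {1..r}" "k0 \<notin> K" "K \<subseteq> {1..r}" "bij_betw f K I"
    "\<forall>k\<in>K. f k \<in> lpm_interval P Q k"
  shows "\<exists>e. e \<notin> I \<and> lpm_indep r P Q (insert e I)"
  using assms
proof (induction "r - k0" arbitrary: k0 K f rule: less_induct)
  case less
  note k0 = less.prems(1) and fresh = less.prems(2) and K = less.prems(3)
    and bij = less.prems(4) and val = less.prems(5)
  define e where "e = north_pos P k0"
  have e: "e \<in> lpm_interval P Q k0"
    unfolding e_def lpm_interval_def using north_pos_Q_le_P k0 by auto
  show ?case
  proof (cases "e \<in> I")
    case False
    have "bij_betw (f(k0 := e)) (insert k0 K) (insert e I)"
      using fresh bij False unfolding bij_betw_def inj_on_def by auto
    moreover have "\<forall>k\<in>insert k0 K. (f(k0 := e)) k \<in> lpm_interval P Q k" using fresh val e by auto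
    ultimately have "lpm_indep r P Q (insert e I)"
      unfolding lpm_indep_def using k0 K by (intro exI[of _ "insert k0 K"] exI[of _ "f(k0 := e)"]) auto
    then show ?thesis using False by blast
  next
    case True
    \<comment> \<open>\<open>e\<close> is used by some class \<open>k1 > k0\<close>; give \<open>e\<close> to \<open>k0\<close> and free \<open>k1\<close> instead\<close>
    define k1 where "k1 = inv_into K f e"
    have k1K: "k1 \<in> K" and fk1: "f k1 = e"
      using True bij unfolding k1_def bij_betw_def by (auto intro: inv_into_into f_inv_into_f)
    have k1: "k1 \<in> {1..r}" using k1K K by auto
    have "e \<le> north_pos P k1" using val k1K fk1 unfolding lpm_interval_def by auto
    then have "k0 \<le> k1" using north_pos_P_strict_mono[of k1 k0] k1 k0 unfolding e_def
      by (metis atLeastAtMost_iff not_le)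
    moreover have "k1 \<noteq> k0" using k1K fresh by auto
    ultimately have lt: "r - k1 < r - k0" using k1 by auto
    define K' where "K' = insert k0 (K - {k1})"
    have "bij_betw (f(k0 := e)) K' I"
      unfolding bij_betw_def
    proof
      show "inj_on (f(k0 := e)) K'"
        using bij k1K fk1 fresh unfolding K'_def bij_betw_def inj_on_def by auto
      show "f(k0 := e) ` K' = I" using fresh bij k1K fk1 unfolding K'_def bij_betw_def by auto
    qed
    moreover have "\<forall>k\<in>K'. (f(k0 := e)) k \<in> lpm_interval P Q k" unfolding K'_def using fresh val e by auto
    moreover have "k1 \<notin> K'" "K' \<subseteq> {1..r}" unfolding K'_def using \<open>k1 \<noteq> k0\<close> k0 K by auto
    ultimately show ?thesis using less.hyps[OF lt k1] by blast
  qed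
qed

lemma lpm_indep_finite: "lpm_indep r P Q I \<Longrightarrow> finite I \<and> card I \<le> r"
proof -
  assume "lpm_indep r P Q I"
  then obtain K f where K: "K \<subseteq> {1..r}" "bij_betw f K I" unfolding lpm_indep_def by blast
  then have "finite K" using finite_subset by blast
  then show ?thesis using K bij_betw_finite bij_betw_same_card card_mono[of "{1..r}" K] by fastforce
qed

lemma lpm_base_full_transversal:
  assumes "B \<in> lpm_bases r P Q"
  shows "\<exists>f. bij_betw f {1..r} B \<and> (\<forall>k\<in>{1..r}. f k \<in> lpm_interval P Q k)"
proof -
  have ind: "lpm_indep r P Q B" and max: "\<And>I. lpm_indep r P Q I \<Longrightarrow> B \<subseteq> I \<Longrightarrow> I = B"
    using assms unfolding lpm_bases_def by auto
  obtain K f where K: "K \<subseteq> {1..r}" and bij: "bij_betw f K B" and val: "\<forall>k\<in>K. f k \<in> lpm_interval P Q k"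
    using ind unfolding lpm_indep_def by blast
  have "K = {1..r}"
  proof (rule ccontr)
    assume "K \<noteq> {1..r}"
    then obtain k0 where "k0 \<in> {1..r}" "k0 \<notin> K" using K by blast
    then obtain e where "e \<notin> B" "lpm_indep r P Q (insert e B)" using lpm_augment[OF _ _ K bij val] by blast
    then show False using max[of "insert e B"] by auto
  qed
  then show ?thesis using bij val by blast
qed

lemma full_transversal_count_bounded:
  assumes bij: "bij_betw f {1..r} B" and val: "\<forall>k\<in>{1..r}. f k \<in> lpm_interval P Q k"
  shows "B \<in> count_bounded (height P) (height Q) (m + r) r"
proof -
  have image: "B = f ` {1..r}" and card: "card B = r" using bij by (auto simp: bij_betw_def card_image)
  have fin: "finite B" using image by simp
  have "B \<subseteq> {1..m+r}" using image val lpm_interval_subset by blast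
  \<comment> \<open>an element \<open>f k \<le> t\<close> forces \<open>north_pos Q k \<le> t\<close>, i.e. \<open>k \<le> height Q t\<close>\<close>
  moreover have "prefix_count B t \<le> height Q t" for t
  proof -
    have "{b\<in>B. b \<le> t} \<subseteq> f ` {1..height Q t}"
    proof
      fix b assume "b \<in> {b\<in>B. b \<le> t}"
      then obtain k where k: "k \<in> {1..r}" "b = f k" "b \<le> t" using image by auto
      then have "north_pos Q k \<le> t" using val unfolding lpm_interval_def by fastforce
      then show "b \<in> f ` {1..height Q t}" using north_pos_Q_le_iff k by auto
    qed
    then have "prefix_count B t \<le> card (f ` {1..height Q t})"
      unfolding prefix_count_def by (intro card_mono) auto
    also have "\<dots> \<le> height Q t" using card_image_le[of "{1..height Q t}" f] by simp
    finally show ?thesis .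
  qed
  \<comment> \<open>an element \<open>f k > t\<close> forces \<open>north_pos P k > t\<close>, i.e. \<open>k > height P t\<close>\<close>
  moreover have "height P t \<le> prefix_count B t" for t
  proof -
    have "{b\<in>B. t < b} \<subseteq> f ` {height P t + 1..r}"
    proof
      fix b assume "b \<in> {b\<in>B. t < b}"
      then obtain k where k: "k \<in> {1..r}" "b = f k" "t < b" using image by auto
      then have "t < north_pos P k" using val unfolding lpm_interval_def by fastforce
      then show "b \<in> f ` {height P t + 1..r}" using north_pos_P_le_iff[of k t] k by auto
    qed
    then have "card {b\<in>B. t < b} \<le> card (f ` {height P t + 1..r})" by (intro card_mono) auto
    also have "\<dots> \<le> r - height P t" using card_image_le[of "{height P t + 1..r}" f] by simp
    finally show ?thesis using prefix_count_complement[OF fin, of t] card height_P_le[of t] by linarith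
  qed
  ultimately show ?thesis unfolding count_bounded_def using card by auto
qed

(* Conversely, matching the k-th smallest element of B with N_k gives a full transversal. *)
lemma count_bounded_full_transversal:
  assumes B: "B \<in> count_bounded (height P) (height Q) (m + r) r"
  shows "\<exists>f. bij_betw f {1..r} B \<and> (\<forall>k\<in>{1..r}. f k \<in> lpm_interval P Q k)"
proof -
  have sub: "B \<subseteq> {1..m+r}" and card: "card B = r"
    and bnd: "\<And>t. height P t \<le> prefix_count B t \<and> prefix_count B t \<le> height Q t"
    using B unfolding count_bounded_def by auto
  have fin: "finite B" using sub by (rule finite_subset) simp
  have "0 \<notin> B" using sub by auto
  then have rank: "bij_betw (prefix_count B) B {1..r}" using prefix_count_rank_bij[OF fin] card by simp
  define f where "f = the_inv_into B (prefix_count B)"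
  have bij: "bij_betw f {1..r} B" unfolding f_def by (rule bij_betw_the_inv_into[OF rank])
  have "f k \<in> lpm_interval P Q k" if k: "k \<in> {1..r}" for k
  proof -
    have fB: "f k \<in> B" using bij k unfolding bij_betw_def by auto
    have rk: "prefix_count B (f k) = k"
      unfolding f_def using f_the_inv_into_f_bij_betw[OF rank] k by simp
    have "k \<le> height Q (f k)" using bnd[of "f k"] rk by simp
    then have "north_pos Q k \<le> f k" using north_pos_Q_le_iff k by auto
    moreover have "f k \<le> north_pos P k"
    proof (rule ccontr)
      assume "\<not> f k \<le> north_pos P k"
      then have "north_pos P k \<le> f k - 1" by simp
      then have "k \<le> height P (f k - 1)" using north_pos_P_le_iff k by auto
      also have "\<dots> \<le> prefix_count B (f k - 1)" using bnd by simp
      also have "\<dots> = k - 1"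
        using prefix_count_Suc[OF fin, of "f k - 1"] fB sub rk by (cases "f k") auto
      finally show False using k by auto
    qed
    ultimately show ?thesis unfolding lpm_interval_def by simp
  qed
  then show ?thesis using bij by blast
qed

lemma full_transversal_lpm_base:
  assumes bij: "bij_betw f {1..r} B" and val: "\<forall>k\<in>{1..r}. f k \<in> lpm_interval P Q k"
  shows "B \<in> lpm_bases r P Q"
proof -
  have ind: "lpm_indep r P Q B" unfolding lpm_indep_def using bij val by blast
  have "card B = r" using bij by (simp add: bij_betw_same_card[symmetric])
  then have "I = B" if "lpm_indep r P Q I" "B \<subseteq> I" for I
    using lpm_indep_finite[OF that(1)] that(2) card_subset_eq[of I B] by (metis antisym card_mono)
  then show ?thesis unfolding lpm_bases_def using ind by auto
qed

theorem lpm_bases_eq_count_bounded: "lpm_bases r P Q = count_bounded (height P) (height Q) (m + r) r"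
  using lpm_base_full_transversal full_transversal_count_bounded
    count_bounded_full_transversal full_transversal_lpm_base by blast

end

section \<open>Cutting a convex hull by a balanced integral functional\<close>

lemma sum_fun_apply: "(sum f S) i = (\<Sum>x\<in>S. f x i)"
  by (induction S rule: infinite_finite_induct) auto

lemma convex_combination_apply: "(\<Sum>v\<in>V. l v *\<^sub>R v) i = (\<Sum>v\<in>V. l v * v i)"
  by (simp add: sum_fun_apply scaleR_fun_def)

lemma face_of_level_set_one_side:
  fixes f :: "'a::real_vector \<Rightarrow> real"
  assumes lin: "linear f" and "convex S" and side: "(\<forall>p\<in>S. f p \<le> c) \<or> (\<forall>p\<in>S. c \<le> f p)"
  shows "(S \<inter> {p. f p = c}) face_of S"
  unfolding face_of_def
proof (intro conjI ballI impI)
  show "S \<inter> {p. f p = c} \<subseteq> S" by auto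
  have "{p. f p = c} = f -` {c}" by auto
  then show "convex (S \<inter> {p. f p = c})"
    using assms(2) convex_linear_vimage[OF lin convex_singleton] by (simp add: convex_Int)
  fix a b y assume a: "a \<in> S" and b: "b \<in> S" and y: "y \<in> S \<inter> {p. f p = c}" and "y \<in> open_segment a b"
  then obtain u where u: "0 < u" "u < 1" "y = (1 - u) *\<^sub>R a + u *\<^sub>R b" by (auto simp: in_segment)
  have "f y = (1 - u) * f a + u * f b" using u(3) linear_add[OF lin] linear_scale[OF lin] by simp
  then have "(1 - u) * (f a - c) + u * (f b - c) = 0" using y by (simp add: algebra_simps)
  moreover have "(1 - u) * (f a - c) \<le> 0 \<and> u * (f b - c) \<le> 0 \<or> 0 \<le> (1 - u) * (f a - c) \<and> 0 \<le> u * (f b - c)"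
    using side a b u(1,2) by (auto simp: mult_nonneg_nonpos)
  ultimately have "(1 - u) * (f a - c) = 0 \<and> u * (f b - c) = 0" by linarith
  then have "f a = c \<and> f b = c" using u(1,2) by simp
  then show "a \<in> S \<inter> {p. f p = c}" "b \<in> S \<inter> {p. f p = c}" using a b by auto
qed

text \<open>The coefficient vectors writing \<open>p\<close> as a convex combination of \<open>V\<close> (values outside \<open>V\<close> are
  irrelevant but kept in \<open>[0,1]\<close>, which makes the set compact).\<close>
definition representations :: "('i \<Rightarrow> real) set \<Rightarrow> ('i \<Rightarrow> real) \<Rightarrow> (('i \<Rightarrow> real) \<Rightarrow> real) set" where
  "representations V p =
     {l. (\<forall>v. l v \<in> {0..1}) \<and> sum l V = 1 \<and> (\<forall>i. (\<Sum>v\<in>V. l v * v i) = p i)}"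

lemma representations_nonempty:
  assumes "finite V" "p \<in> convex hull V"
  shows "representations V p \<noteq> {}"
proof -
  obtain u where u0: "\<forall>v\<in>V. 0 \<le> u v" and u1: "sum u V = 1" and up: "(\<Sum>v\<in>V. u v *\<^sub>R v) = p"
    using assms unfolding convex_hull_finite[OF assms(1)] by blast
  define l where "l v = (if v \<in> V then u v else 0)" for v
  have "sum l V = 1" using u1 unfolding l_def by simp
  moreover have "l v \<in> {0..1}" for v
    using u0 member_le_sum[of v V u] assms(1) u1 unfolding l_def by auto
  moreover have "(\<Sum>v\<in>V. l v * v i) = p i" for i
    using convex_combination_apply[of u V i] up unfolding l_def by simp
  ultimately show ?thesis unfolding representations_def by blast
qed

lemma compact_representations:
  fixes V :: "('i \<Rightarrow> real) set"
  shows "compact (representations V p)"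
proof -
  have coord: "continuous_on S (\<lambda>l :: ('i \<Rightarrow> real) \<Rightarrow> real. l v)" for S v
    by (rule continuous_on_subset[OF continuous_on_product_coordinates]) simp
  have box: "compact (PiE UNIV (\<lambda>_ :: 'i \<Rightarrow> real. {0..1::real}))"
    by (metis compactin_PiE compact_Icc compactin_euclidean_iff euclidean_product_topology)
  have sum1: "closed {l :: ('i \<Rightarrow> real) \<Rightarrow> real. sum l V = 1}"
    by (intro closed_Collect_eq) (auto intro!: continuous_intros coord)
  have repr: "closed {l :: ('i \<Rightarrow> real) \<Rightarrow> real. \<forall>i. (\<Sum>v\<in>V. l v * v i) = p i}"
    by (intro closed_Collect_all closed_Collect_eq) (auto intro!: continuous_intros coord)
  have "representations V p = PiE UNIV (\<lambda>_. {0..1}) \<inter> {l. sum l V = 1}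
      \<inter> {l. \<forall>i. (\<Sum>v\<in>V. l v * v i) = p i}"
    unfolding representations_def by (auto simp: PiE_def extensional_def)
  then show ?thesis using compact_Int_closed[OF compact_Int_closed[OF box sum1] repr] by simp
qed

lemma representation_support_hull:
  assumes "finite V" and l: "l \<in> representations V p" and U: "U \<subseteq> V" and supp: "\<And>v. v \<in> V - U \<Longrightarrow> l v = 0"
  shows "p \<in> convex hull U"
proof -
  have "finite U" using U assms(1) by (rule finite_subset)
  have "sum l U = sum l V" using assms(1) U supp by (intro sum.mono_neutral_left) auto
  moreover have "(\<Sum>v\<in>U. l v *\<^sub>R v) = p"
  proof
    fix i
    have "(\<Sum>v\<in>U. l v * v i) = (\<Sum>v\<in>V. l v * v i)" using assms(1) U supp by (intro sum.mono_neutral_left) auto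
    then show "(\<Sum>v\<in>U. l v *\<^sub>R v) i = p i" using l unfolding representations_def convex_combination_apply by simp
  qed
  ultimately show ?thesis using l unfolding convex_hull_finite[OF \<open>finite U\<close>] representations_def by auto
qed

lemma linear_representation:
  assumes "linear f" and "l \<in> representations V p"
  shows "f p = (\<Sum>v\<in>V. l v * f v)"
proof -
  have "(\<Sum>v\<in>V. l v *\<^sub>R v) = p" using assms(2) unfolding representations_def convex_combination_apply
    by (auto simp: convex_combination_apply)
  then have "f p = (\<Sum>v\<in>V. f (l v *\<^sub>R v))" using linear_sum[OF assms(1)] by metis
  then show ?thesis using linear_scale[OF assms(1)] by simp
qed

lemma weight_above_mean:
  fixes l g :: "'a \<Rightarrow> real"
  assumes "finite V" and nn: "\<And>v. v \<in> V \<Longrightarrow> 0 \<le> l v" and "sum l V = 1" and mean: "c \<le> (\<Sum>v\<in>V. l v * g v)"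
    and v: "v \<in> V" "0 < l v" "g v < c"
  shows "\<exists>w\<in>V. 0 < l w \<and> c < g w"
proof (rule ccontr)
  assume none: "\<not> ?thesis"
  have "0 \<le> l w * (c - g w)" if "w \<in> V" for w
    using nn[OF that] none that by (cases "l w = 0") (auto intro!: mult_nonneg_nonneg)
  then have "l v * (c - g v) \<le> (\<Sum>w\<in>V. l w * (c - g w))" using assms(1) v(1) by (intro member_le_sum) auto
  also have "\<dots> = c * sum l V - (\<Sum>w\<in>V. l w * g w)"
    by (simp add: algebra_simps sum_subtractf sum_distrib_left)
  finally have "l v * (c - g v) \<le> c - (\<Sum>w\<in>V. l w * g w)" using \<open>sum l V = 1\<close> by simp
  moreover have "0 < l v * (c - g v)" using v(2,3) by simp
  ultimately show False using mean by linarith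
qed

lemma deficit_decreases:
  fixes a c j k1 k2 :: int
  assumes "a < j" "j < c" "k1 + k2 = a + c" "\<bar>k1 - k2\<bar> \<le> 1"
  shows "max 0 (j - k1) + max 0 (j - k2) < max 0 (j - a) + max 0 (j - c)"
proof -
  have "k1 - k2 \<le> 1" "k2 - k1 \<le> 1" using assms(4) by auto
  then have "max 0 (j - k1) + max 0 (j - k2) < j - a"
    using assms(1-3) by (cases "k1 \<le> j"; cases "k2 \<le> j") (simp_all add: max_def)
  then show ?thesis using assms(1,2) by simp
qed

definition transfer :: "'a \<Rightarrow> 'a \<Rightarrow> 'a \<Rightarrow> 'a \<Rightarrow> 'a \<Rightarrow> real" where
  "transfer v w v' w' C = of_bool (C = v') + of_bool (C = w') - of_bool (C = v) - of_bool (C = w)"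

lemma sum_transfer:
  assumes "finite V" "v \<in> V" "w \<in> V" "v' \<in> V" "w' \<in> V"
  shows "(\<Sum>C\<in>V. transfer v w v' w' C * g C) = g v' + g w' - g v - g w"
proof -
  have pick: "(\<Sum>C\<in>V. of_bool (C = a) * g C) = g a" if "a \<in> V" for a
  proof -
    have "(\<Sum>C\<in>V. of_bool (C = a) * g C) = (\<Sum>C\<in>V. if C = a then g C else 0)"
      by (intro sum.cong) auto
    then show ?thesis using assms(1) that by simp
  qed
  have "(\<Sum>C\<in>V. transfer v w v' w' C * g C)
      = (\<Sum>C\<in>V. of_bool (C = v') * g C) + (\<Sum>C\<in>V. of_bool (C = w') * g C)
        - (\<Sum>C\<in>V. of_bool (C = v) * g C) - (\<Sum>C\<in>V. of_bool (C = w) * g C)"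
    unfolding transfer_def by (simp only: distrib_right left_diff_distrib sum.distrib sum_subtractf)
  also have "\<dots> = g v' + g w' - g v - g w" using assms(2-5) by (simp add: pick)
  finally show ?thesis .
qed

lemma sum_shifted_weights:
  fixes l e g :: "'a \<Rightarrow> real"
  shows "(\<Sum>C\<in>V. (l C + \<nu> * e C) * g C) = (\<Sum>C\<in>V. l C * g C) + \<nu> * (\<Sum>C\<in>V. e C * g C)"
  by (simp add: sum.distrib sum_distrib_left distrib_right mult.assoc)

definition deficit :: "int \<Rightarrow> (('i \<Rightarrow> real) \<Rightarrow> real) \<Rightarrow> ('i \<Rightarrow> real) set \<Rightarrow> (('i \<Rightarrow> real) \<Rightarrow> real) \<Rightarrow> real" where
  "deficit j f V l = (\<Sum>v\<in>V. l v * max 0 (of_int j - f v))"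

(* Since v + w = v' + w', a transfer of weight at most l v, l w keeps representing p. *)
lemma representations_transfer:
  assumes fin: "finite V" and l: "l \<in> representations V p"
    and pts: "v \<in> V" "w \<in> V" "v' \<in> V" "w' \<in> V" "v + w = v' + w'" "v \<noteq> w"
    and \<nu>: "0 \<le> \<nu>" "\<nu> \<le> l v" "\<nu> \<le> l w"
  shows "(\<lambda>C. l C + \<nu> * transfer v w v' w' C) \<in> representations V p" (is "?l' \<in> _")
proof -
  have lnn: "\<And>v. 0 \<le> l v" and l1: "\<And>v. l v \<le> 1" and ls: "sum l V = 1"
    using l unfolding representations_def by auto
  have shift: "(\<Sum>C\<in>V. ?l' C * g C) = (\<Sum>C\<in>V. l C * g C) + \<nu> * (g v' + g w' - g v - g w)" for g
    unfolding sum_shifted_weights sum_transfer[OF fin pts(1-4)] ..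
  have nn: "0 \<le> ?l' C" for C
    unfolding transfer_def using pts(6) \<nu> lnn[of C] lnn[of v'] lnn[of w'] by auto
  have s: "sum ?l' V = 1" using shift[of "\<lambda>_. 1"] ls by simp
  have "?l' C \<le> 1" for C
  proof (cases "C \<in> V")
    case True then show ?thesis using member_le_sum[of C V ?l'] nn fin s by auto
  next
    case False then show ?thesis using l1[of C] pts(1-4) unfolding transfer_def by auto
  qed
  moreover have "(\<Sum>C\<in>V. ?l' C * C i) = p i" for i
    using shift[of "\<lambda>C. C i"] fun_cong[OF pts(5), of i] l unfolding representations_def by simp
  ultimately show ?thesis using nn s unfolding representations_def by auto
qed

lemma deficit_transfer_decreases:
  fixes f :: "('i \<Rightarrow> real) \<Rightarrow> real" and j :: int
  assumes fin: "finite V" and lin: "linear f" and int: "\<And>v. v \<in> V \<Longrightarrow> f v \<in> \<int>"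
    and pts: "v \<in> V" "w \<in> V" "v' \<in> V" "w' \<in> V" "v + w = v' + w'" "\<bar>f v' - f w'\<bar> \<le> 1"
    and below: "f v < of_int j" and above: "of_int j < f w" and "0 < \<nu>"
  shows "deficit j f V (\<lambda>C. l C + \<nu> * transfer v w v' w' C) < deficit j f V l"
proof -
  obtain a c k1 k2 where fv: "f v = of_int a" "f w = of_int c" "f v' = of_int k1" "f w' = of_int k2"
    using int pts(1-4) by (metis Ints_cases)
  moreover have "f v' + f w' = f v + f w" using linear_add[OF lin] pts(5) by metis
  ultimately have "max 0 (j - k1) + max 0 (j - k2) < max 0 (j - a) + max 0 (j - c)"
    using below above pts(6) by (intro deficit_decreases) (auto simp flip: of_int_add of_int_diff of_int_abs)
  moreover have "max 0 (of_int j - of_int m) = (of_int (max 0 (j - m)) :: real)" for m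
    by (simp add: max_def)
  ultimately show ?thesis
    unfolding deficit_def sum_shifted_weights sum_transfer[OF fin pts(1-4)] using fv \<open>0 < \<nu>\<close>
    by (simp add: mult_pos_neg flip: of_int_add of_int_diff of_int_less_iff)
qed

(* A representation of minimal deficit puts no weight below level j, because otherwise a
   point above j carries weight and a balancing transfer would lower the deficit. *)
lemma convex_hull_upper_halfspace:
  fixes V :: "('i \<Rightarrow> real) set" and f :: "('i \<Rightarrow> real) \<Rightarrow> real" and j :: int
  assumes fin: "finite V" and lin: "linear f" and int: "\<And>v. v \<in> V \<Longrightarrow> f v \<in> \<int>"
    and bal: "\<And>v w. v \<in> V \<Longrightarrow> w \<in> V \<Longrightarrow> \<exists>v'\<in>V. \<exists>w'\<in>V. v + w = v' + w' \<and> \<bar>f v' - f w'\<bar> \<le> 1"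
    and p: "p \<in> convex hull V" and pj: "of_int j \<le> f p"
  shows "p \<in> convex hull {v\<in>V. of_int j \<le> f v}"
proof -
  have "continuous_on (representations V p) (deficit j f V)"
    unfolding deficit_def
    by (intro continuous_intros continuous_on_subset[OF continuous_on_product_coordinates]) auto
  then obtain l where l: "l \<in> representations V p"
    and lmin: "\<And>l'. l' \<in> representations V p \<Longrightarrow> deficit j f V l \<le> deficit j f V l'"
    using continuous_attains_inf[OF compact_representations representations_nonempty[OF fin p]] by blast
  have lnn: "\<And>v. 0 \<le> l v" and ls: "sum l V = 1" using l unfolding representations_def by auto
  have "l v = 0" if v: "v \<in> V" "f v < of_int j" for v
  proof (rule ccontr)
    assume "l v \<noteq> 0"
    then have "0 < l v" using lnn[of v] by simp
    moreover have "of_int j \<le> (\<Sum>v\<in>V. l v * f v)" using pj linear_representation[OF lin l] by simp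
    ultimately obtain w where w: "w \<in> V" "0 < l w" "of_int j < f w"
      using weight_above_mean[OF fin _ ls] v lnn by blast
    obtain v' w' where v'w': "v' \<in> V" "w' \<in> V" "v + w = v' + w'" "\<bar>f v' - f w'\<bar> \<le> 1"
      using bal[OF v(1) w(1)] by blast
    define \<nu> where "\<nu> = min (l v) (l w)"
    have "v \<noteq> w" using v(2) w(3) by auto
    then have "(\<lambda>C. l C + \<nu> * transfer v w v' w' C) \<in> representations V p"
      using \<open>0 < l v\<close> w(2) unfolding \<nu>_def
      by (intro representations_transfer[OF fin l v(1) w(1) v'w'(1-3)]) auto
    moreover have "deficit j f V (\<lambda>C. l C + \<nu> * transfer v w v' w' C) < deficit j f V l"
      using \<open>0 < l v\<close> w(2) unfolding \<nu>_def
      by (intro deficit_transfer_decreases[OF fin lin int v(1) w(1) v'w'] v(2) w(3)) auto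
    ultimately show False using lmin by fastforce
  qed
  then show ?thesis by (intro representation_support_hull[OF fin l]) auto
qed

(* The same for the lower side, applied to -f. *)
lemma convex_hull_lower_halfspace:
  fixes V :: "('i \<Rightarrow> real) set" and f :: "('i \<Rightarrow> real) \<Rightarrow> real" and j :: int
  assumes fin: "finite V" and lin: "linear f" and int: "\<And>v. v \<in> V \<Longrightarrow> f v \<in> \<int>"
    and bal: "\<And>v w. v \<in> V \<Longrightarrow> w \<in> V \<Longrightarrow> \<exists>v'\<in>V. \<exists>w'\<in>V. v + w = v' + w' \<and> \<bar>f v' - f w'\<bar> \<le> 1"
    and p: "p \<in> convex hull V" and pj: "f p \<le> of_int j"
  shows "p \<in> convex hull {v\<in>V. f v \<le> of_int j}"
proof -
  have "linear (\<lambda>p. - f p)" using lin by (simp add: linear_compose_neg)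
  moreover have "\<bar>- f v' - - f w'\<bar> = \<bar>f v' - f w'\<bar>" for v' w' by linarith
  ultimately have "p \<in> convex hull {v\<in>V. of_int (- j) \<le> - f v}"
    using int bal p pj by (intro convex_hull_upper_halfspace[OF fin]) auto
  then show ?thesis by simp
qed

section \<open>The hyperplane split of a count-bounded family\<close>

definition prefix_sum :: "nat \<Rightarrow> (nat \<Rightarrow> real) \<Rightarrow> real" where
  "prefix_sum x p = (\<Sum>i\<le>x. p i)"

lemma linear_prefix_sum: "linear (prefix_sum x)"
  by (rule linearI) (simp_all add: prefix_sum_def scaleR_fun_def sum.distrib sum_distrib_left)

lemma prefix_sum_indicator_vec: "prefix_sum x (indicator_vec B) = real (prefix_count B x)"
proof -
  have "prefix_sum x (indicator_vec B) = (\<Sum>i\<in>{..x}. if i \<in> B then 1 else 0)"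
    unfolding prefix_sum_def indicator_vec_def by simp
  also have "\<dots> = card ({..x} \<inter> B)" by (simp add: sum.If_cases)
  also have "{..x} \<inter> B = {s\<in>B. s \<le> x}" by auto
  finally show ?thesis unfolding prefix_count_def .
qed

lemma count_bounded_finite_family: "finite (count_bounded lo hi n r)"
  by (rule finite_subset[of _ "Pow {1..n}"]) (auto simp: count_bounded_def)

lemma count_bounded_balanced_vertices:
  assumes "v \<in> indicator_vec ` count_bounded lo hi n r" "w \<in> indicator_vec ` count_bounded lo hi n r"
  shows "\<exists>v'\<in>indicator_vec ` count_bounded lo hi n r. \<exists>w'\<in>indicator_vec ` count_bounded lo hi n r.
           v + w = v' + w' \<and> \<bar>prefix_sum x v' - prefix_sum x w'\<bar> \<le> 1"
proof -
  obtain B B' where B: "B \<in> count_bounded lo hi n r" and B': "B' \<in> count_bounded lo hi n r"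
    and "v = indicator_vec B" "w = indicator_vec B'" using assms by blast
  then show ?thesis using count_bounded_balance(1,2)[OF B B'] count_bounded_balance(3,4)[OF B B', of x] indicator_vec_halves[of B B']
    by (intro bexI[of _ "indicator_vec (odd_half B B')"] bexI[of _ "indicator_vec (even_half B B')"])
      (auto simp: prefix_sum_indicator_vec)
qed

lemma base_polytope_count_bounded_upper:
  "base_polytope (count_bounded lo hi n r) \<inter> {p. real j \<le> prefix_sum x p}
     = base_polytope {B\<in>count_bounded lo hi n r. j \<le> prefix_count B x}"
proof
  let ?V = "indicator_vec ` count_bounded lo hi n r"
  have "{v\<in>?V. of_int (int j) \<le> prefix_sum x v} = indicator_vec ` {B\<in>count_bounded lo hi n r. j \<le> prefix_count B x}"
    by (auto simp: prefix_sum_indicator_vec)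
  moreover have "p \<in> convex hull {v\<in>?V. of_int (int j) \<le> prefix_sum x v}"
    if "p \<in> convex hull ?V" "real j \<le> prefix_sum x p" for p
    using that count_bounded_balanced_vertices
    by (intro convex_hull_upper_halfspace linear_prefix_sum count_bounded_finite_family finite_imageI)
       (auto simp: prefix_sum_indicator_vec)
  ultimately show "base_polytope (count_bounded lo hi n r) \<inter> {p. real j \<le> prefix_sum x p}
     \<subseteq> base_polytope {B\<in>count_bounded lo hi n r. j \<le> prefix_count B x}"
    unfolding base_polytope_def by auto
  have "convex {p. real j \<le> prefix_sum x p}"
    using convex_linear_vimage[OF linear_prefix_sum, of "{real j..}" x] by (simp add: vimage_def)
  then show "base_polytope {B\<in>count_bounded lo hi n r. j \<le> prefix_count B x}
     \<subseteq> base_polytope (count_bounded lo hi n r) \<inter> {p. real j \<le> prefix_sum x p}"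
    unfolding base_polytope_def
    by (intro Int_greatest hull_mono image_mono hull_minimal) (auto simp: prefix_sum_indicator_vec)
qed

lemma base_polytope_count_bounded_lower:
  "base_polytope (count_bounded lo hi n r) \<inter> {p. prefix_sum x p \<le> real j}
     = base_polytope {B\<in>count_bounded lo hi n r. prefix_count B x \<le> j}"
proof
  let ?V = "indicator_vec ` count_bounded lo hi n r"
  have "{v\<in>?V. prefix_sum x v \<le> of_int (int j)} = indicator_vec ` {B\<in>count_bounded lo hi n r. prefix_count B x \<le> j}"
    by (auto simp: prefix_sum_indicator_vec)
  moreover have "p \<in> convex hull {v\<in>?V. prefix_sum x v \<le> of_int (int j)}"
    if "p \<in> convex hull ?V" "prefix_sum x p \<le> real j" for p
    using that count_bounded_balanced_vertices
    by (intro convex_hull_lower_halfspace linear_prefix_sum count_bounded_finite_family finite_imageI)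
       (auto simp: prefix_sum_indicator_vec)
  ultimately show "base_polytope (count_bounded lo hi n r) \<inter> {p. prefix_sum x p \<le> real j}
     \<subseteq> base_polytope {B\<in>count_bounded lo hi n r. prefix_count B x \<le> j}"
    unfolding base_polytope_def by auto
  have "convex {p. prefix_sum x p \<le> real j}"
    using convex_linear_vimage[OF linear_prefix_sum, of "{..real j}" x] by (simp add: vimage_def)
  then show "base_polytope {B\<in>count_bounded lo hi n r. prefix_count B x \<le> j}
     \<subseteq> base_polytope (count_bounded lo hi n r) \<inter> {p. prefix_sum x p \<le> real j}"
    unfolding base_polytope_def
    by (intro Int_greatest hull_mono image_mono hull_minimal) (auto simp: prefix_sum_indicator_vec)
qed

lemma count_bounded_restrict_upper:
  "{B\<in>count_bounded lo hi n r. j \<le> prefix_count B x} = count_bounded (lo(x := max j (lo x))) hi n r"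
  unfolding count_bounded_def by (auto split: if_splits)

lemma count_bounded_restrict_lower:
  "{B\<in>count_bounded lo hi n r. prefix_count B x \<le> j} = count_bounded lo (hi(x := min j (hi x))) n r"
  unfolding count_bounded_def by (auto split: if_splits)

theorem count_bounded_hyperplane_split:
  assumes low: "B \<in> count_bounded lo hi n r" "prefix_count B x < j"
    and high: "B' \<in> count_bounded lo hi n r" "j < prefix_count B' x"
  shows "has_nontrivial_hyperplane_split {1..n} (count_bounded lo hi n r)"
proof -
  let ?P = "base_polytope (count_bounded lo hi n r)"
  let ?H = "{p. prefix_sum x p = real j}"
  define \<B>1 where "\<B>1 = {B\<in>count_bounded lo hi n r. j \<le> prefix_count B x}"
  define \<B>2 where "\<B>2 = {B\<in>count_bounded lo hi n r. prefix_count B x \<le> j}"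
  have P1: "base_polytope \<B>1 = ?P \<inter> {p. real j \<le> prefix_sum x p}"
    unfolding \<B>1_def base_polytope_count_bounded_upper ..
  have P2: "base_polytope \<B>2 = ?P \<inter> {p. prefix_sum x p \<le> real j}"
    unfolding \<B>2_def base_polytope_count_bounded_lower ..
  have "B' \<in> \<B>1" "B \<in> \<B>2" using low high unfolding \<B>1_def \<B>2_def by auto
  then have matroids: "matroid_bases {1..n} \<B>1" "matroid_bases {1..n} \<B>2"
    unfolding \<B>1_def \<B>2_def count_bounded_restrict_upper count_bounded_restrict_lower
    by (intro count_bounded_matroid; blast)+
  have cover: "?P = base_polytope \<B>1 \<union> base_polytope \<B>2" unfolding P1 P2 by auto
  have "convex (base_polytope \<B>1)" "convex (base_polytope \<B>2)" unfolding base_polytope_def by simp_all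
  moreover have "\<forall>p\<in>base_polytope \<B>1. real j \<le> prefix_sum x p" "\<forall>p\<in>base_polytope \<B>2. prefix_sum x p \<le> real j"
    unfolding P1 P2 by auto
  ultimately have "(base_polytope \<B>1 \<inter> ?H) face_of base_polytope \<B>1"
    "(base_polytope \<B>2 \<inter> ?H) face_of base_polytope \<B>2"
    by (auto intro!: face_of_level_set_one_side linear_prefix_sum)
  moreover have "base_polytope \<B>1 \<inter> base_polytope \<B>2 = base_polytope \<B>1 \<inter> ?H"
    "base_polytope \<B>1 \<inter> base_polytope \<B>2 = base_polytope \<B>2 \<inter> ?H"
    unfolding P1 P2 by auto
  ultimately have faces: "(base_polytope \<B>1 \<inter> base_polytope \<B>2) face_of base_polytope \<B>1"
    "(base_polytope \<B>1 \<inter> base_polytope \<B>2) face_of base_polytope \<B>2" by simp_all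
  have "indicator_vec B \<in> ?P" "indicator_vec B' \<in> ?P"
    unfolding base_polytope_def using low(1) high(1) by (auto intro: hull_inc)
  moreover have "indicator_vec B \<notin> base_polytope \<B>1" "indicator_vec B' \<notin> base_polytope \<B>2"
    unfolding P1 P2 using low(2) high(2) by (auto simp: prefix_sum_indicator_vec)
  ultimately have proper: "base_polytope \<B>1 \<noteq> ?P" "base_polytope \<B>2 \<noteq> ?P" by auto
  show ?thesis
    unfolding has_nontrivial_hyperplane_split_def using matroids cover faces proper by blast
qed

text \<open>Only \<open>x < north_pos P j\<close> and \<open>north_pos Q (j + 1) \<le> x\<close> are needed: the lower path \<open>P\<close> has
  fewer than \<open>j\<close> North steps among its first \<open>x\<close> steps, the upper path \<open>Q\<close> more than \<open>j\<close>.\<close>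
theorem corollary4:
  fixes m r :: nat and P Q :: "bool list" and x j :: nat
  assumes "lattice_path m r P" and "lattice_path m r Q" and "never_above P Q"
    and "1 \<le> j" and "j \<le> r - 1"
    and "north_pos Q j < x" and "x < north_pos P j"
    and "north_pos Q (j + 1) < x + 1" and "x + 1 < north_pos P (j + 1)"
  shows "has_nontrivial_hyperplane_split {1..m + r} (lpm_bases r P Q)"
proof -
  interpret lattice_path_pair m r P Q by unfold_locales (fact assms)+
  have j: "1 \<le> j" "j + 1 \<le> r" using assms(4,5) by simp_all
  have "prefix_count (north_set P) x < j"
    using north_pos_P_le_iff[of j x] j assms(7) by (simp add: height_eq_prefix_count)
  moreover have "j < prefix_count (north_set Q) x"
    using north_pos_Q_le_iff[of "j + 1" x] j assms(8) by (simp add: height_eq_prefix_count)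
  ultimately show ?thesis
    unfolding lpm_bases_eq_count_bounded using north_sets_count_bounded
    by (intro count_bounded_hyperplane_split)
qed

end
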